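(* Let $K$ be an algebraically closed field with $\operatorname{char}K\neq 2$, and let $f$ be a Lie polynomial (not necessarily homogeneous) in $x_1,\dots,x_m$, evaluated on $\operatorname{sl}_2(K)$. Then $\operatorname{Im} f$ is one of: $\{0\}$; $\operatorname{sl}_2(K)$; or the set consisting of $0$ and all non-nilpotent trace-zero $2\times 2$ matrices.
   Context: A Lie polynomial is an element of the free Lie algebra on $x_1,\dots,x_m$, i.e. a linear combination of Lie monomials built from the letters by iterated brackets; it is viewed as an associative polynomial via $[a,b]=ab-ba$. $\operatorname{sl}_2(K)$ is the Lie algebra of trace-zero $2\times 2$ matrices, and $\operatorname{Im} f=\{f(a_1,\dots,a_m):a_i\in\operatorname{sl}_2(K)\}$. *)

theory Defs
  imports "HOL-Analysis.Analysis" "HOL-Computational_Algebra.Polynomial"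
begin

text \<open>Each such expression denotes an element
of the free Lie algebra; evaluation factors through it, so the image is well defined.\<close>
datatype 'k lie_poly =
    LVar nat
  | LZero
  | LAdd "'k lie_poly" "'k lie_poly"
  | LScale 'k "'k lie_poly"
  | LBracket "'k lie_poly" "'k lie_poly"

fun lie_vars :: "'k lie_poly \<Rightarrow> nat set" where
  "lie_vars (LVar i) = {i}"
| "lie_vars LZero = {}"
| "lie_vars (LAdd p q) = lie_vars p \<union> lie_vars q"
| "lie_vars (LScale c p) = lie_vars p"
| "lie_vars (LBracket p q) = lie_vars p \<union> lie_vars q"

definition commutator :: "'k::comm_ring_1^2^2 \<Rightarrow> 'k^2^2 \<Rightarrow> 'k^2^2" where
  "commutator A B = A ** B - B ** A"

fun lie_eval :: "(nat \<Rightarrow> 'k::comm_ring_1^2^2) \<Rightarrow> 'k lie_poly \<Rightarrow> 'k^2^2" where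
  "lie_eval a (LVar i) = a i"
| "lie_eval a LZero = 0"
| "lie_eval a (LAdd p q) = lie_eval a p + lie_eval a q"
| "lie_eval a (LScale c p) = (\<chi> i j. c * (lie_eval a p) $ i $ j)"
| "lie_eval a (LBracket p q) = commutator (lie_eval a p) (lie_eval a q)"

definition sl2 :: "('k::comm_ring_1^2^2) set" where
  "sl2 = {A. trace A = 0}"

text \<open>Image of f on sl_2(K), variables x_1..x_m being the letters in [0..<m].\<close>
definition lie_image :: "nat \<Rightarrow> 'k::comm_ring_1 lie_poly \<Rightarrow> ('k^2^2) set" where
  "lie_image m f = {lie_eval a f | a. \<forall>i<m. a i \<in> sl2}"

fun mat_pow :: "'k::comm_ring_1^2^2 \<Rightarrow> nat \<Rightarrow> 'k^2^2" where
  "mat_pow A 0 = mat 1"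
| "mat_pow A (Suc n) = A ** mat_pow A n"

definition nilpotent_mat :: "'k::comm_ring_1^2^2 \<Rightarrow> bool" where
  "nilpotent_mat A \<longleftrightarrow> (\<exists>n. mat_pow A n = 0)"

end

theory Submission
  imports Defs
begin

text \<open>The image of a Lie polynomial f on sl_2(K) lies in sl_2(K), contains 0 and is stable under
conjugation; and for sl_2 over an algebraically closed field of characteristic not 2 the conjugacy
classes of nonzero elements are determined by the determinant, all nonzero nilpotents forming a
single class. If f takes some value y of nonzero determinant, then det f(l y) is a polynomial in l
vanishing at 0 but not at 1, hence attains every value, so all non-nilpotent elements lie in the
image. The remaining point is that det f vanishing on sl_2(K) forces f to vanish on sl_2(K): evaluate
f on generic elements of the trace-zero part of a quaternion division algebra over K(s, t^2), which
is a Lie subalgebra of sl_2(K[s, t]) on which the determinant is anisotropic.\<close>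

section \<open>Two-by-two matrices and similarity\<close>

lemma mat2_eq_iff:
  "(A::'a^2^2) = B \<longleftrightarrow> A$1$1 = B$1$1 \<and> A$1$2 = B$1$2 \<and> A$2$1 = B$2$1 \<and> A$2$2 = B$2$2"
  by (auto simp: vec_eq_iff forall_2)

lemma matrix_mult_2_nth:
  "((A::'a::comm_ring_1^2^2) ** B) $ i $ j = A$i$1 * B$1$j + A$i$2 * B$2$j"
  by (simp add: matrix_matrix_mult_def sum_2)

lemma trace_2: "trace (A::'a::comm_ring_1^2^2) = A$1$1 + A$2$2"
  by (simp add: trace_def sum_2)

lemma sl2_iff: "(A::'a::comm_ring_1^2^2) \<in> sl2 \<longleftrightarrow> A$2$2 = - A$1$1"
  by (auto simp: sl2_def trace_2 eq_neg_iff_add_eq_0 add.commute)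

definition mat2 :: "'a \<Rightarrow> 'a \<Rightarrow> 'a \<Rightarrow> 'a \<Rightarrow> 'a^2^2" where
  "mat2 a b c d = (\<chi> i j. if i = 1 then (if j = 1 then a else b) else (if j = 1 then c else d))"

lemma mat2_nth [simp]:
  "mat2 a b c d $1$1 = a" "mat2 a b c d $1$2 = b" "mat2 a b c d $2$1 = c" "mat2 a b c d $2$2 = d"
  by (simp_all add: mat2_def)

lemma matrix_diff_ldistrib: "(A::'a::ring_1^'n^'m) ** (B - C) = A ** B - A ** C"
  by (simp add: matrix_matrix_mult_def vec_eq_iff sum_subtractf algebra_simps)

lemma matrix_add_rdistrib: "((A + B)::'a::semiring_1^'n^'m) ** C = A ** C + B ** C"
  by (simp add: matrix_matrix_mult_def vec_eq_iff sum.distrib algebra_simps)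

lemma matrix_diff_rdistrib: "((A - B)::'a::ring_1^'n^'m) ** C = A ** C - B ** C"
  by (simp add: matrix_matrix_mult_def vec_eq_iff sum_subtractf algebra_simps)

lemma map_matrix_scale_mult_right:
  "map_matrix ((*) c) ((A::'a::comm_semiring_1^'n^'m) ** B) = A ** map_matrix ((*) c) B"
  by (simp add: matrix_matrix_mult_def vec_eq_iff sum_distrib_left mult_ac)

lemma map_matrix_scale_mult_left:
  "map_matrix ((*) c) ((A::'a::comm_semiring_1^'n^'m) ** B) = map_matrix ((*) c) A ** B"
  by (simp add: matrix_matrix_mult_def vec_eq_iff sum_distrib_left mult_ac)

definition similar_matrix :: "'a::semiring_1^'n^'n \<Rightarrow> 'a^'n^'n \<Rightarrow> bool" where
  "similar_matrix A B \<longleftrightarrow> (\<exists>P P'. P ** P' = mat 1 \<and> P' ** P = mat 1 \<and> B = P ** A ** P')"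

lemma similar_matrix_refl: "similar_matrix A A"
  unfolding similar_matrix_def by (metis matrix_mul_lid matrix_mul_rid)

lemma similar_matrix_sym: "similar_matrix A B \<Longrightarrow> similar_matrix B A"
  unfolding similar_matrix_def by (metis matrix_mul_assoc matrix_mul_lid matrix_mul_rid)

lemma similar_matrix_trans:
  assumes "similar_matrix A B" "similar_matrix B C" shows "similar_matrix A C"
proof -
  obtain P P' where P: "P ** P' = mat 1" "P' ** P = mat 1" "B = P ** A ** P'"
    using assms(1) unfolding similar_matrix_def by blast
  obtain R R' where R: "R ** R' = mat 1" "R' ** R = mat 1" "C = R ** B ** R'"
    using assms(2) unfolding similar_matrix_def by blast
  have "(R ** P) ** (P' ** R') = R ** (P ** P') ** R'" "(P' ** R') ** (R ** P) = P' ** (R' ** R) ** P"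
    by (simp_all only: matrix_mul_assoc)
  then have "(R ** P) ** (P' ** R') = mat 1" "(P' ** R') ** (R ** P) = mat 1"
    using P R by simp_all
  moreover have "C = (R ** P) ** A ** (P' ** R')"
    using P R by (simp add: matrix_mul_assoc)
  ultimately show ?thesis unfolding similar_matrix_def by blast
qed

lemma similar_matrixI:
  fixes A B P :: "'a::field^'n^'n"
  assumes "det P \<noteq> 0" "B ** P = P ** A" shows "similar_matrix A B"
proof -
  obtain P' where P': "P ** P' = mat 1" "P' ** P = mat 1"
    using assms(1) invertible_det_nz unfolding invertible_def by blast
  have "B = B ** P ** P'" using P' by (simp flip: matrix_mul_assoc)
  also have "\<dots> = P ** A ** P'" using assms(2) by simp
  finally show ?thesis unfolding similar_matrix_def using P' by blast
qed

lemma trace_similar: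
  fixes A B :: "'a::comm_semiring_1^'n^'n"
  assumes "similar_matrix A B" shows "trace B = trace A"
proof -
  obtain P P' where P: "P' ** P = mat 1" "B = P ** A ** P'"
    using assms unfolding similar_matrix_def by blast
  have "trace (P ** A ** P') = trace (P' ** (P ** A))" by (rule trace_mul_sym)
  then show ?thesis using P by (simp add: matrix_mul_assoc)
qed

section \<open>Evaluating Lie polynomials\<close>

lemma lie_eval_cong: "(\<And>i. i \<in> lie_vars f \<Longrightarrow> a i = b i) \<Longrightarrow> lie_eval a f = lie_eval b f"
  by (induction f) auto

lemma lie_eval_zero_assignment: "lie_eval (\<lambda>_. (0::'a::comm_ring_1^2^2)) f = 0"
proof (induction f)
  case (LScale c p) then show ?case by (simp add: vec_eq_iff)
qed (simp_all add: commutator_def)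

lemma trace_lie_eval:
  assumes "\<And>i. i \<in> lie_vars f \<Longrightarrow> a i \<in> sl2"
  shows "lie_eval a f \<in> (sl2 :: ('a::comm_ring_1^2^2) set)"
  using assms
proof (induction f)
  case (LAdd p q) then show ?case by (simp add: sl2_def trace_add)
next
  case (LScale c p) then show ?case by (simp add: sl2_iff)
next
  case (LBracket p q) show ?case
    by (simp add: sl2_def commutator_def trace_sub trace_mul_sym[of "lie_eval a p"])
qed (simp_all add: sl2_def trace_2)

lemma lie_eval_LScale: "lie_eval a (LScale c p) = map_matrix ((*) c) (lie_eval a p)"
  by (simp add: map_matrix_def)

lemma lie_eval_conjugate:
  fixes P P' :: "'a::comm_ring_1^2^2"
  assumes inv: "P' ** P = mat 1"
  shows "lie_eval (\<lambda>i. P ** a i ** P') f = P ** lie_eval a f ** P'"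
proof (induction f)
  case (LAdd p q) then show ?case by (simp add: matrix_add_ldistrib matrix_add_rdistrib)
next
  case (LScale c p) then show ?case
    by (metis lie_eval_LScale map_matrix_scale_mult_left map_matrix_scale_mult_right)
next
  case (LBracket p q)
  have "(P ** X ** P') ** (P ** Y ** P') = P ** X ** (P' ** P) ** Y ** P'" for X Y
    by (simp only: matrix_mul_assoc)
  then have "(P ** X ** P') ** (P ** Y ** P') = P ** (X ** Y) ** P'" for X Y
    using inv by (simp add: matrix_mul_assoc)
  with LBracket show ?case by (simp add: commutator_def matrix_diff_ldistrib matrix_diff_rdistrib)
qed simp_all

lemma map_matrix_lie_eval:
  fixes h :: "'a::comm_ring_1 \<Rightarrow> 'b::comm_ring_1"
  assumes add: "\<And>x y. h (x + y) = h x + h y" and mult: "\<And>x y. h (x * y) = h x * h y"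
  shows "map_matrix h (lie_eval a (map_lie_poly g f))
       = lie_eval (\<lambda>i. map_matrix h (a i)) (map_lie_poly (h \<circ> g) f)"
proof -
  have diff: "h (x - y) = h x - h y" for x y
    using add[of "x - y" y] by (simp add: eq_diff_eq)
  have zero: "h 0 = 0"
    using add[of 0 0] by simp
  show ?thesis
  proof (induction f)
    case (LScale c p) then show ?case by (simp add: vec_eq_iff mult)
  next
    case (LBracket p q) then show ?case
      by (simp add: vec_eq_iff forall_2 commutator_def matrix_mult_2_nth add mult diff)
  qed (simp_all add: vec_eq_iff add zero)
qed

lemma det_map_matrix_2:
  fixes h :: "'a::comm_ring_1 \<Rightarrow> 'b::comm_ring_1"
  assumes "\<And>x y. h (x + y) = h x + h y" "\<And>x y. h (x * y) = h x * h y"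
  shows "det (map_matrix h (M::'a^2^2)) = h (det M)"
proof -
  have "h (x - y) = h x - h y" for x y
    using assms(1)[of "x - y" y] by (simp add: eq_diff_eq)
  then show ?thesis by (simp add: det_2 assms)
qed

lemma lie_image_subset_sl2: "lie_vars f \<subseteq> {..<m} \<Longrightarrow> lie_image m f \<subseteq> sl2"
  unfolding lie_image_def by (auto intro!: trace_lie_eval)

lemma zero_in_lie_image: "0 \<in> lie_image m (f :: 'a::comm_ring_1 lie_poly)"
proof -
  have "(0::'a^2^2) \<in> sl2" by (simp add: sl2_def trace_2)
  then show ?thesis
    unfolding lie_image_def by (auto intro!: exI[of _ "\<lambda>_. 0"] simp: lie_eval_zero_assignment)
qed

lemma lie_image_similar:
  assumes "A \<in> lie_image m f" "similar_matrix A B" shows "B \<in> lie_image m f"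
proof -
  obtain a where a: "A = lie_eval a f" "\<forall>i<m. a i \<in> sl2"
    using assms(1) unfolding lie_image_def by auto
  obtain P P' where P: "P ** P' = mat 1" "P' ** P = mat 1" "B = P ** A ** P'"
    using assms(2) unfolding similar_matrix_def by blast
  have "B = lie_eval (\<lambda>i. P ** a i ** P') f"
    using P a by (simp add: lie_eval_conjugate)
  moreover have "P ** X ** P' \<in> sl2" if "X \<in> sl2" for X
  proof -
    have "similar_matrix X (P ** X ** P')"
      using P unfolding similar_matrix_def by blast
    then have "trace (P ** X ** P') = trace X" by (rule trace_similar)
    then show ?thesis using that unfolding sl2_def by simp
  qed
  ultimately show ?thesis using a(2) unfolding lie_image_def by blast
qed

section \<open>Generic pure quaternions\<close>

definition neg_var :: "'a::comm_ring_1 poly \<Rightarrow> 'a poly" where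
  "neg_var p = p \<circ>\<^sub>p [:0, -1:]"

lemma neg_var_0 [simp]: "neg_var 0 = 0"
  by (simp add: neg_var_def)
lemma neg_var_add [simp]: "neg_var (p + q) = neg_var p + neg_var q"
  by (simp add: neg_var_def pcompose_add)
lemma neg_var_diff [simp]: "neg_var (p - q) = neg_var p - neg_var q"
  by (simp add: neg_var_def pcompose_diff)
lemma neg_var_mult [simp]: "neg_var (p * q) = neg_var p * neg_var q"
  by (simp add: neg_var_def pcompose_mult)
lemma neg_var_pCons [simp]: "neg_var (pCons a p) = pCons a (- neg_var p)"
  by (simp add: neg_var_def pcompose_pCons)
lemma neg_var_neg_var [simp]: "neg_var (neg_var p) = p"
  by (simp add: neg_var_def flip: pcompose_assoc) (simp add: pcompose_pCons)
lemma neg_var_smult [simp]: "neg_var (smult c p) = smult c (neg_var p)"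
  by (simp add: neg_var_def pcompose_smult)
lemma neg_var_numeral [simp]: "neg_var (numeral n) = numeral n"
  by (subst (1 2) numeral_poly) simp
lemma lead_coeff_neg_var: "lead_coeff (neg_var (p::'a::idom poly)) = (-1) ^ degree p * lead_coeff p"
  by (simp add: neg_var_def lead_coeff_comp mult.commute)

text \<open>With s the variable of the coefficient ring and t the outer variable, these are the matrices
  [[a(t), b(t)], [s b(-t), -a(t)]] with a odd in t, i.e.\ the trace-zero elements of the quaternion
  algebra over K(s, t^2) with norm form a^2 + s b(t) b(-t).\<close>
definition pure_quaternion :: "'a::comm_ring_1 poly poly^2^2 \<Rightarrow> bool" where
  "pure_quaternion M \<longleftrightarrow>
     M$2$2 = - M$1$1 \<and> neg_var (M$1$1) = - M$1$1 \<and> M$2$1 = [:[:0, 1:]:] * neg_var (M$1$2)"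

lemma pure_quaternion_commutator:
  assumes "pure_quaternion A" "pure_quaternion B"
  shows "pure_quaternion (commutator A B)"
  using assms unfolding pure_quaternion_def commutator_def
  by (simp add: matrix_mult_2_nth algebra_simps)

lemma pure_quaternion_lie_eval:
  assumes "\<And>i. pure_quaternion (X i)"
  shows "pure_quaternion (lie_eval X (map_lie_poly (\<lambda>c. [:[:c:]:]) f))"
proof (induction f)
  case (LAdd p q) then show ?case by (simp add: pure_quaternion_def algebra_simps)
next
  case (LScale c p) then show ?case by (simp add: pure_quaternion_def mult.left_commute)
next
  case (LBracket p q) then show ?case by (simp add: pure_quaternion_commutator)
next
  case (LVar i) show ?case using assms by simp
qed (simp add: pure_quaternion_def)

lemma norm_form_anisotropic:
  fixes a b :: "'a::idom poly poly"
  assumes "a * a + [:[:0, 1:]:] * b * neg_var b = 0"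
  shows "a = 0 \<and> b = 0"
proof (cases "b = 0")
  case True then show ?thesis using assms by simp
next
  case False
  txt \<open>The leading coefficients in t have even degree in s on the left and odd degree on the right.\<close>
  have "a * a = - ([:[:0, 1:]:] * b * neg_var b)"
    using assms by (simp add: eq_neg_iff_add_eq_0)
  then have "degree (lead_coeff (a * a)) = degree (lead_coeff ([:[:0, 1:]:] * b * neg_var b))"
    by (simp add: lead_coeff_minus)
  moreover have "degree (lead_coeff (a * a)) = 2 * degree (lead_coeff a)"
    unfolding lead_coeff_mult by (cases "a = 0") (simp_all add: degree_mult_eq)
  moreover have "degree ((-1::'a poly) ^ degree b) = 0"
    by (simp add: degree_power_eq)
  then have "degree (lead_coeff ([:[:0, 1:]:] * b * neg_var b)) = 1 + 2 * degree (lead_coeff b)"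
    using False by (simp add: lead_coeff_mult lead_coeff_neg_var degree_mult_eq)
  ultimately show ?thesis by presburger
qed

lemma pure_quaternion_det_eq_0:
  fixes M :: "'a::idom poly poly^2^2"
  assumes "pure_quaternion M" "det M = 0"
  shows "M = 0"
proof -
  have "M$1$1 * M$1$1 + [:[:0, 1:]:] * M$1$2 * neg_var (M$1$2) = - det M"
    using assms(1) unfolding pure_quaternion_def det_2 by (simp add: algebra_simps)
  then have "M$1$1 = 0 \<and> M$1$2 = 0"
    using assms(2) norm_form_anisotropic by simp
  then show ?thesis
    using assms(1) unfolding pure_quaternion_def by (simp add: mat2_eq_iff)
qed

lemma infinite_UNIV_alg_closed: "infinite (UNIV :: 'a::alg_closed_field set)"
proof
  assume fin: "finite (UNIV :: 'a set)"
  define q :: "'a poly" where "q = (\<Prod>a\<in>UNIV. [:-a, 1:]) + 1"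
  have "degree q = card (UNIV :: 'a set)"
    unfolding q_def using fin
    by (subst degree_add_eq_left) (simp_all add: degree_prod_eq_sum_degree finite_UNIV_card_ge_0)
  then have "degree q > 0"
    using fin by (simp add: finite_UNIV_card_ge_0)
  then obtain x where "poly q x = 0"
    using alg_closed_imp_poly_has_root by blast
  moreover have "poly (\<Prod>a\<in>UNIV. [:-a, 1:]) x = 0"
    unfolding poly_prod using fin by (intro prod_zero) (auto intro: bexI[of _ x])
  ultimately show False
    by (simp add: q_def)
qed

definition poly2 :: "'a::comm_semiring_0 poly poly \<Rightarrow> 'a \<Rightarrow> 'a \<Rightarrow> 'a" where
  "poly2 p s t = poly (poly p [:t:]) s"

lemma poly2_add [simp]: "poly2 (p + q) s t = poly2 p s t + poly2 q s t"
  by (simp add: poly2_def)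
lemma poly2_mult [simp]: "poly2 (p * q) s t = poly2 p s t * poly2 q s t"
  by (simp add: poly2_def)
lemma poly2_const [simp]: "poly2 [:[:c:]:] s t = c"
  by (simp add: poly2_def)

lemma poly2_eq_0_if_vanishing:
  fixes p :: "'a::idom poly poly"
  assumes inf: "infinite (UNIV :: 'a set)" and vanish: "\<And>s t. poly2 p s t = 0"
  shows "p = 0"
proof -
  have "poly p [:t:] = 0" for t
    using vanish poly_roots_finite[of "poly p [:t:]"] inf unfolding poly2_def by auto
  then have "range (\<lambda>t. [:t:]) \<subseteq> {x. poly p x = 0}"
    by auto
  moreover have "infinite (range (\<lambda>t::'a. [:t:]))"
    using inf by (simp add: finite_image_iff inj_on_def)
  ultimately show ?thesis
    using poly_roots_finite finite_subset by blast
qed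

lemma lie_eval_poly2:
  "map_matrix (\<lambda>p. poly2 p s t) (lie_eval X (map_lie_poly (\<lambda>c. [:[:c:]:]) f))
     = lie_eval (\<lambda>i. map_matrix (\<lambda>p. poly2 p s t) (X i)) f"
  by (subst map_matrix_lie_eval) (simp_all add: comp_def lie_poly.map_ident)

definition generic_sl2 :: "'k::field^2^2 \<Rightarrow> 'k poly poly^2^2" where
  "generic_sl2 x =
     (let a = [:0, [:x$1$1:]:]; b = [:[:(x$1$2 + x$2$1) / 2:], [:(x$1$2 - x$2$1) / 2:]:]
      in mat2 a b ([:[:0, 1:]:] * neg_var b) (- a))"

lemma pure_quaternion_generic_sl2: "pure_quaternion (generic_sl2 x)"
  by (simp add: pure_quaternion_def generic_sl2_def Let_def)

lemma poly2_generic_sl2_in_sl2: "map_matrix (\<lambda>p. poly2 p s t) (generic_sl2 x) \<in> sl2"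
  by (simp add: sl2_iff generic_sl2_def Let_def poly2_def)

lemma poly2_generic_sl2_1_1:
  fixes x :: "'k::field^2^2"
  assumes "(2::'k) \<noteq> 0" "x \<in> sl2"
  shows "map_matrix (\<lambda>p. poly2 p 1 1) (generic_sl2 x) = x"
proof -
  have "(u + v) / 2 + (u - v) / 2 = u" "(u + v) / 2 - (u - v) / 2 = v" for u v :: 'k
    using assms(1) by (simp_all add: add_divide_distrib[symmetric] diff_divide_distrib[symmetric])
  then show ?thesis
    using assms(2) by (simp add: mat2_eq_iff sl2_iff generic_sl2_def Let_def poly2_def)
qed

lemma lie_image_singular_imp_zero:
  fixes f :: "'k::field lie_poly"
  assumes inf: "infinite (UNIV :: 'k set)" and two: "(2::'k) \<noteq> 0"
    and vars: "lie_vars f \<subseteq> {..<m}" and singular: "\<And>A. A \<in> lie_image m f \<Longrightarrow> det A = 0"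
  shows "lie_image m f \<subseteq> {0}"
proof
  fix A assume "A \<in> lie_image m f"
  then obtain x where A: "A = lie_eval x f" and x: "\<forall>i<m. x i \<in> sl2"
    unfolding lie_image_def by blast
  define F where "F = lie_eval (\<lambda>i. generic_sl2 (x i)) (map_lie_poly (\<lambda>c. [:[:c:]:]) f)"
  have specialize: "map_matrix (\<lambda>p. poly2 p s t) F
      = lie_eval (\<lambda>i. map_matrix (\<lambda>p. poly2 p s t) (generic_sl2 (x i))) f" for s t
    unfolding F_def by (rule lie_eval_poly2)
  have "det F = 0"
  proof (rule poly2_eq_0_if_vanishing[OF inf])
    fix s t
    have "poly2 (det F) s t = det (map_matrix (\<lambda>p. poly2 p s t) F)"
      by (simp add: det_map_matrix_2)
    also have "\<dots> = 0"
      unfolding specialize lie_image_def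
      by (intro singular) (auto simp: lie_image_def poly2_generic_sl2_in_sl2)
    finally show "poly2 (det F) s t = 0" .
  qed
  moreover have "pure_quaternion F"
    unfolding F_def by (intro pure_quaternion_lie_eval pure_quaternion_generic_sl2)
  ultimately have "F = 0"
    by (simp add: pure_quaternion_det_eq_0)
  then have "lie_eval (\<lambda>i. map_matrix (\<lambda>p. poly2 p 1 1) (generic_sl2 (x i))) f = 0"
    using specialize[of 1 1] by (simp add: vec_eq_iff poly2_def)
  also have "lie_eval (\<lambda>i. map_matrix (\<lambda>p. poly2 p 1 1) (generic_sl2 (x i))) f = A"
    unfolding A using vars x by (intro lie_eval_cong) (auto simp: poly2_generic_sl2_1_1 two)
  finally show "A \<in> {0}" by simp
qed

section \<open>Conjugacy classes in sl_2 and the image\<close>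

lemma alg_closed_poly_attains:
  fixes p :: "'a::alg_closed_field poly"
  assumes "poly p x \<noteq> poly p y"
  shows "\<exists>z. poly p z = c"
proof -
  have "degree p > 0"
  proof (rule ccontr)
    assume "\<not> degree p > 0"
    then obtain a where "p = [:a:]"
      using degree0_coeffs by blast
    then show False using assms by simp
  qed
  then have "degree (p + [:- c:]) > 0"
    by (simp add: degree_add_eq_left)
  then obtain z where "poly (p + [:- c:]) z = 0"
    using alg_closed_imp_poly_has_root by blast
  then show ?thesis by auto
qed

lemma det_lie_eval_scaled_surj:
  fixes f :: "'k::alg_closed_field lie_poly" and y :: "nat \<Rightarrow> 'k^2^2"
  assumes "det (lie_eval y f) \<noteq> 0"
  shows "\<exists>l. det (lie_eval (\<lambda>i. map_matrix ((*) l) (y i)) f) = d"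
proof -
  define G where
    "G = det (lie_eval (\<lambda>i. map_matrix (\<lambda>c. [:0, c:]) (y i)) (map_lie_poly (\<lambda>c. [:c:]) f))"
  have poly_G: "poly G l = det (lie_eval (\<lambda>i. map_matrix ((*) l) (y i)) f)" for l
  proof -
    have "poly G l = det (lie_eval (\<lambda>i. map_matrix (\<lambda>p. poly p l) (map_matrix (\<lambda>c. [:0, c:]) (y i)))
                       (map_lie_poly ((\<lambda>p. poly p l) \<circ> (\<lambda>c. [:c:])) f))"
      unfolding G_def by (simp add: det_map_matrix_2 flip: map_matrix_lie_eval)
    also have "(\<lambda>i. map_matrix (\<lambda>p. poly p l) (map_matrix (\<lambda>c. [:0, c:]) (y i))) = (\<lambda>i. map_matrix ((*) l) (y i))"
      by (simp add: fun_eq_iff vec_eq_iff)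
    finally show ?thesis
      by (simp add: comp_def lie_poly.map_ident)
  qed
  have "(\<lambda>i. map_matrix ((*) 0) (y i)) = (\<lambda>_. 0)"
    by (simp add: fun_eq_iff vec_eq_iff)
  then have "poly G 0 = 0"
    using poly_G[of 0] by (simp add: lie_eval_zero_assignment det_2)
  moreover have "(\<lambda>i. map_matrix ((*) 1) (y i)) = y"
    by (simp add: fun_eq_iff vec_eq_iff)
  then have "poly G 1 \<noteq> 0"
    using poly_G[of 1] assms by simp
  ultimately show ?thesis
    using alg_closed_poly_attains[of G 0 1 d] poly_G by auto
qed

lemma det_mat_pow: "det (mat_pow A n) = det A ^ n"
  by (induction n) (simp_all add: det_mul)

lemma nilpotent_mat_imp_det_eq_0:
  fixes A :: "'a::idom^2^2"
  assumes "nilpotent_mat A"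
  shows "det A = 0"
proof -
  obtain n where "mat_pow A n = 0"
    using assms unfolding nilpotent_mat_def by blast
  then have "det (mat_pow A n) = 0"
    by (simp add: det_2)
  then have "det A ^ n = 0"
    by (simp add: det_mat_pow)
  then show ?thesis by simp
qed

lemma sl2_square: "(A::'a::comm_ring_1^2^2) \<in> sl2 \<Longrightarrow> A ** A = mat (- det A)"
  by (simp add: sl2_iff mat2_eq_iff matrix_mult_2_nth mat_def det_2 algebra_simps)

lemma sl2_nilpotent_iff:
  fixes A :: "'a::idom^2^2"
  assumes "A \<in> sl2"
  shows "nilpotent_mat A \<longleftrightarrow> det A = 0"
proof
  assume "det A = 0"
  then have "mat_pow A 2 = 0"
    using sl2_square[OF assms] by (simp add: numeral_2_eq_2)
  then show "nilpotent_mat A"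
    unfolding nilpotent_mat_def by blast
qed (rule nilpotent_mat_imp_det_eq_0)

lemma sl2_similar_diagonal:
  fixes A :: "'k::alg_closed_field^2^2"
  assumes two: "(2::'k) \<noteq> 0" and A: "A \<in> sl2" "det A \<noteq> 0"
  obtains \<mu> where "\<mu> * \<mu> = - det A" "similar_matrix (mat2 \<mu> 0 0 (-\<mu>)) A"
proof -
  define a b c where "a = A$1$1" "b = A$1$2" "c = A$2$1"
  have A22: "A$2$2 = -a"
    using A(1) by (simp add: sl2_iff a_b_c_def)
  have detA: "det A = - (a * a) - b * c"
    using A22 by (simp add: det_2 a_b_c_def)
  show thesis
  proof (cases "b = 0")
    case False
    obtain \<mu> where "\<mu> ^ 2 = - det A"
      using nth_root_exists[of 2 "- det A"] by auto
    then have \<mu>: "\<mu> * \<mu> = - det A"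
      by (simp add: power2_eq_square)
    txt \<open>The columns of P are eigenvectors of A for \<mu> and -\<mu>.\<close>
    define P where "P = mat2 b b (\<mu> - a) (- \<mu> - a)"
    have "det P = - (2 * b * \<mu>)"
      by (simp add: P_def det_2 algebra_simps)
    then have "det P \<noteq> 0"
      using two False \<mu> A(2) by auto
    moreover have "A ** P = P ** mat2 \<mu> 0 0 (-\<mu>)"
      using \<mu> detA by (simp add: P_def mat2_eq_iff matrix_mult_2_nth A22 a_b_c_def[symmetric] algebra_simps)
    ultimately show thesis
      using that \<mu> similar_matrixI by blast
  next
    case True
    then have "a \<noteq> 0"
      using A(2) detA by auto
    define P where "P = mat2 (2 * a) 0 c 1"
    have "det P \<noteq> 0"
      using two \<open>a \<noteq> 0\<close> by (simp add: P_def det_2)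
    moreover have "A ** P = P ** mat2 a 0 0 (-a)"
      using True by (simp add: P_def mat2_eq_iff matrix_mult_2_nth A22 a_b_c_def[symmetric] algebra_simps)
    ultimately show thesis
      using that[of a] True detA similar_matrixI by auto
  qed
qed

lemma sl2_similar_if_det_eq:
  fixes A B :: "'k::alg_closed_field^2^2"
  assumes two: "(2::'k) \<noteq> 0" and A: "A \<in> sl2" "det A \<noteq> 0" and B: "B \<in> sl2" "det B = det A"
  shows "similar_matrix A B"
proof -
  obtain \<mu> where \<mu>: "\<mu> * \<mu> = - det A" "similar_matrix (mat2 \<mu> 0 0 (-\<mu>)) A"
    using sl2_similar_diagonal[OF two A] .
  obtain \<nu> where \<nu>: "\<nu> * \<nu> = - det A" "similar_matrix (mat2 \<nu> 0 0 (-\<nu>)) B"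
    using sl2_similar_diagonal[OF two B(1)] A(2) B(2) by metis
  have "(\<nu> - \<mu>) * (\<nu> + \<mu>) = 0"
    using \<mu> \<nu> by (simp add: algebra_simps)
  then have "\<nu> = \<mu> \<or> \<nu> = -\<mu>"
    by (auto simp: eq_neg_iff_add_eq_0)
  moreover have "similar_matrix (mat2 \<mu> 0 0 (-\<mu>)) (mat2 (-\<mu>) 0 0 \<mu>)"
    by (rule similar_matrixI[of "mat2 0 1 1 0"]) (simp_all add: det_2 mat2_eq_iff matrix_mult_2_nth)
  ultimately have "similar_matrix (mat2 \<mu> 0 0 (-\<mu>)) (mat2 \<nu> 0 0 (-\<nu>))"
    using similar_matrix_refl by auto
  then show ?thesis
    using \<mu> \<nu> similar_matrix_sym similar_matrix_trans by metis
qed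

lemma sl2_nilpotent_similar:
  fixes A :: "'k::field^2^2"
  assumes A: "A \<in> sl2" "det A = 0" "A \<noteq> 0"
  shows "similar_matrix (mat2 0 1 0 0) A"
proof -
  define a b c where "a = A$1$1" "b = A$1$2" "c = A$2$1"
  have A22: "A$2$2 = -a"
    using A(1) by (simp add: sl2_iff a_b_c_def)
  have "a * a + b * c = - det A"
    using A22 by (simp add: det_2 a_b_c_def)
  then have detA: "a * a + b * c = 0"
    using A(2) by simp
  show ?thesis
  proof (cases "b = 0")
    case False
    define P where "P = mat2 b 0 (-a) 1"
    have "det P \<noteq> 0"
      using False by (simp add: P_def det_2)
    moreover have "A ** P = P ** mat2 0 1 0 0"
      using detA by (simp add: P_def mat2_eq_iff matrix_mult_2_nth A22 a_b_c_def[symmetric] algebra_simps)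
    ultimately show ?thesis by (rule similar_matrixI)
  next
    case True
    then have "a = 0" "c \<noteq> 0"
      using detA A(3) A22 by (auto simp: mat2_eq_iff a_b_c_def)
    define P where "P = mat2 0 1 c 0"
    have "det P \<noteq> 0"
      using \<open>c \<noteq> 0\<close> by (simp add: P_def det_2)
    moreover have "A ** P = P ** mat2 0 1 0 0"
      using True \<open>a = 0\<close> by (simp add: P_def mat2_eq_iff matrix_mult_2_nth A22 a_b_c_def[symmetric])
    ultimately show ?thesis by (rule similar_matrixI)
  qed
qed

lemma lie_image_nonsingular:
  fixes f :: "'k::alg_closed_field lie_poly"
  assumes two: "(2::'k) \<noteq> 0" and vars: "lie_vars f \<subseteq> {..<m}"
    and A: "A \<in> lie_image m f" "det A \<noteq> 0" and B: "B \<in> sl2" "det B \<noteq> 0"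
  shows "B \<in> lie_image m f"
proof -
  obtain y where y: "A = lie_eval y f" "\<forall>i<m. y i \<in> sl2"
    using A(1) unfolding lie_image_def by blast
  obtain l where l: "det (lie_eval (\<lambda>i. map_matrix ((*) l) (y i)) f) = det B"
    using det_lie_eval_scaled_surj A(2) y(1) by blast
  have "\<forall>i<m. map_matrix ((*) l) (y i) \<in> sl2"
    using y(2) by (simp add: sl2_iff)
  then have C: "lie_eval (\<lambda>i. map_matrix ((*) l) (y i)) f \<in> lie_image m f"
    unfolding lie_image_def by blast
  moreover have "similar_matrix (lie_eval (\<lambda>i. map_matrix ((*) l) (y i)) f) B"
    using C lie_image_subset_sl2[OF vars] l B two by (intro sl2_similar_if_det_eq) auto
  ultimately show ?thesis
    by (rule lie_image_similar)
qed

lemma lie_image_nilpotent: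
  fixes f :: "'k::field lie_poly"
  assumes vars: "lie_vars f \<subseteq> {..<m}"
    and N: "N \<in> lie_image m f" "N \<noteq> 0" "det N = 0" and B: "B \<in> sl2" "det B = 0"
  shows "B \<in> lie_image m f"
proof (cases "B = 0")
  case True then show ?thesis by (simp add: zero_in_lie_image)
next
  case False
  have "N \<in> sl2"
    using N(1) lie_image_subset_sl2[OF vars] by blast
  then have "similar_matrix N B"
    using sl2_nilpotent_similar N(2,3) B False similar_matrix_sym similar_matrix_trans by metis
  then show ?thesis
    by (rule lie_image_similar[OF N(1)])
qed

theorem theorem1p16:
  fixes f :: "'k::alg_closed_field lie_poly" and m :: nat
  assumes "(2::'k) \<noteq> 0"
    and "lie_vars f \<subseteq> {..<m}"
  shows "lie_image m f = {0}
       \<or> lie_image m f = sl2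
       \<or> lie_image m f = {0} \<union> {A \<in> sl2. \<not> nilpotent_mat A}"
proof -
  note two = assms(1) and vars = assms(2)
  have sub: "lie_image m f \<subseteq> sl2" and zero: "0 \<in> lie_image m f"
    using lie_image_subset_sl2[OF vars] zero_in_lie_image by blast+
  show ?thesis
  proof (cases "\<exists>A \<in> lie_image m f. det A \<noteq> 0")
    case False
    then show ?thesis
      using lie_image_singular_imp_zero[OF infinite_UNIV_alg_closed two vars] zero by blast
  next
    case True
    then have nonsingular: "{B \<in> sl2. det B \<noteq> 0} \<subseteq> lie_image m f"
      using lie_image_nonsingular[OF two vars] by blast
    show ?thesis
    proof (cases "\<exists>N \<in> lie_image m f. N \<noteq> 0 \<and> det N = 0")
      case True
      then have "lie_image m f = sl2"
        using sub nonsingular lie_image_nilpotent[OF vars] by blast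
      then show ?thesis by blast
    next
      case False
      then have "lie_image m f = {0} \<union> {A \<in> sl2. \<not> nilpotent_mat A}"
        using sub zero nonsingular sl2_nilpotent_iff by blast
      then show ?thesis by blast
    qed
  qed
qed

end
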